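(* Let $m\ge 1$ and let $(\phi_n)_{n\ge 0}$ be vectors in $\mathbb{R}^m$ such that $A_n=\phi_n\phi_n^\top$ satisfies $0\le A_n\le I$ for all $n$. Define $\Phi(i,i)=I$ and $\Phi(n+1,i)=(I-A_n)\Phi(n,i)$ for $n\ge i$. Let $(\mu_j)_{j\ge 0}$ be nonnegative weights, and for $k<N$ let $S_{Nk}=\sum_{j=k}^{N-1}\mu_jA_j$ and $B_{jk}=\sum_{l=k}^{j-1}(\phi_j^\top\phi_l)^2$. Let $(t_k)_{k\ge 0}$ be a strictly increasing sequence of nonnegative integers (so $t_k\to\infty$). If $$\sum_{k=1}^\infty\frac{\lambda_{\min}(S_{t_kt_{k-1}})}{\left(\sqrt{\max_{t_{k-1}\le j<t_k}\mu_j}+\sqrt{\sum_{j=t_{k-1}}^{t_k-1}\mu_jB_{jt_{k-1}}}\right)^2}=\infty$$ (with all denominators nonzero), then $\Phi(n,0)\to 0$ as $n\to\infty$.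
   Context: $\lambda_{\min}$ denotes the smallest eigenvalue of a symmetric matrix; $0\le A\le I$ is in the Loewner order; convergence of matrices is in any norm. *)

theory Defs
  imports "HOL-Analysis.Analysis"
begin

definition outer :: "real^'m \<Rightarrow> real^'m^'m" where
  "outer v = (\<chi> i j. v $ i * v $ j)"

definition loewner_le :: "real^'m^'m \<Rightarrow> real^'m^'m \<Rightarrow> bool" where
  "loewner_le A B \<longleftrightarrow> (\<forall>x. x \<bullet> ((B - A) *v x) \<ge> 0)"

definition eigenvalues :: "real^'m^'m \<Rightarrow> real set" where
  "eigenvalues A = {l. \<exists>v. v \<noteq> 0 \<and> A *v v = l *\<^sub>R v}"

definition lambda_min :: "real^'m^'m \<Rightarrow> real" where
  "lambda_min A = Min (eigenvalues A)"

text \<open>Transition matrix: trans_mat A i k = Phi(i+k, i), i.e.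
  Phi(i,i) = I and Phi(n+1,i) = (I - A n) Phi(n,i).\<close>
fun trans_mat :: "(nat \<Rightarrow> real^'m^'m) \<Rightarrow> nat \<Rightarrow> nat \<Rightarrow> real^'m^'m" where
  "trans_mat A i 0 = mat 1"
| "trans_mat A i (Suc k) = (mat 1 - A (i + k)) ** trans_mat A i k"

definition Phi :: "(nat \<Rightarrow> real^'m^'m) \<Rightarrow> nat \<Rightarrow> nat \<Rightarrow> real^'m^'m" where
  "Phi A n i = trans_mat A i (n - i)"

end

theory Submission
  imports Defs
begin

(* Fix a block [s, N), put y j = Phi(j, s) x and a j = phi j . y j. Each factor I - phi j phi j^T
   removes at least a j^2 from |y j|^2, so sum_j a j^2 <= |x|^2 - |Phi(N, s) x|^2, and
   x = y j + sum_(s<=l<j) a l phi l gives phi j . x = a j + sum_(s<=l<j) (phi j . phi l) a l.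
   Minkowski's inequality for the weighted l2 norm and Cauchy-Schwarz in the inner sums bound
   x^T S x by d^2 (|x|^2 - |Phi(N, s) x|^2), d being the denominator of the theorem, while
   x^T S x >= lambda_min(S) |x|^2. So the k-th block multiplies |Phi(n, 0) x|^2 by at most
   1 - c k <= exp (- c k), and the divergence of sum c k drives this decreasing sequence to 0. *)

lemma outer_mult_vec: "outer v *v x = (v \<bullet> x) *\<^sub>R v"
  by (simp add: vec_eq_iff matrix_vector_mult_def outer_def inner_vec_def sum_distrib_left
      mult.assoc mult.commute mult.left_commute)

lemma sum_scaleR_outer_mult_vec:
  "(\<Sum>j\<in>I. c j *\<^sub>R outer (f j)) *v x = (\<Sum>j\<in>I. (c j * (f j \<bullet> x)) *\<^sub>R f j)"
proof (induction I rule: infinite_finite_induct)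
  case (insert a F)
  then show ?case
    by (simp add: matrix_vector_mult_add_rdistrib outer_mult_vec flip: scaleR_matrix_vector_assoc)
qed auto

lemma inner_sum_scaleR_outer_mult_vec:
  "y \<bullet> ((\<Sum>j\<in>I. c j *\<^sub>R outer (f j)) *v x) = (\<Sum>j\<in>I. c j * (f j \<bullet> x) * (f j \<bullet> y))"
  by (simp add: sum_scaleR_outer_mult_vec inner_sum_right inner_commute)

lemma inner_self_le_1_if_loewner_le_outer:
  assumes "loewner_le (outer p) (mat 1)"
  shows "p \<bullet> p \<le> 1"
proof -
  have "0 \<le> p \<bullet> ((mat 1 - outer p) *v p)"
    using assms unfolding loewner_le_def by blast
  also have "\<dots> = (p \<bullet> p) * (1 - p \<bullet> p)"
    by (simp add: matrix_vector_mult_diff_rdistrib outer_mult_vec inner_diff_right algebra_simps)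
  finally show ?thesis
    using inner_ge_zero[of p] by (cases "p \<bullet> p = 0") (auto simp: zero_le_mult_iff)
qed

lemma norm_minus_outer_mult_vec_le:
  assumes "p \<bullet> p \<le> 1"
  shows "(norm ((mat 1 - outer p) *v y))\<^sup>2 \<le> (norm y)\<^sup>2 - (p \<bullet> y)\<^sup>2"
proof -
  have e: "(mat 1 - outer p) *v y = y - (p \<bullet> y) *\<^sub>R p"
    by (simp add: matrix_vector_mult_diff_rdistrib outer_mult_vec)
  have "(norm ((mat 1 - outer p) *v y))\<^sup>2 = y \<bullet> y - 2 * (p \<bullet> y)\<^sup>2 + (p \<bullet> y)\<^sup>2 * (p \<bullet> p)"
    unfolding e power2_norm_eq_inner
    by (simp add: inner_diff_left inner_diff_right inner_commute power2_eq_square algebra_simps)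
  also have "\<dots> \<le> y \<bullet> y - (p \<bullet> y)\<^sup>2"
    using mult_left_mono[OF assms, of "(p \<bullet> y)\<^sup>2"] by simp
  finally show ?thesis
    by (simp add: power2_norm_eq_inner)
qed

lemma Phi_self [simp]: "Phi A i i = mat 1"
  by (simp add: Phi_def)

lemma Phi_Suc: "i \<le> n \<Longrightarrow> Phi A (Suc n) i = (mat 1 - A n) ** Phi A n i"
  by (simp add: Phi_def Suc_diff_le)

lemma trans_mat_add: "trans_mat A i (a + b) = trans_mat A (i + a) b ** trans_mat A i a"
  by (induction b) (auto simp: matrix_mul_assoc add.assoc)

lemma Phi_mult: "i \<le> j \<Longrightarrow> j \<le> n \<Longrightarrow> Phi A n i = Phi A n j ** Phi A j i"
  using trans_mat_add[of A i "j - i" "n - j"] by (simp add: Phi_def)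

lemma Phi_outer_Suc_mult_vec:
  assumes "i \<le> n"
  shows "Phi (\<lambda>n. outer (phi n)) (Suc n) i *v x
    = Phi (\<lambda>n. outer (phi n)) n i *v x - (phi n \<bullet> (Phi (\<lambda>n. outer (phi n)) n i *v x)) *\<^sub>R phi n"
  using assms
  by (simp add: Phi_Suc matrix_vector_mul_assoc[symmetric] matrix_vector_mult_diff_rdistrib
      outer_mult_vec)

lemma norm_Phi_outer_Suc_le:
  assumes "phi n \<bullet> phi n \<le> 1" and "i \<le> n"
  shows "(norm (Phi (\<lambda>n. outer (phi n)) (Suc n) i *v x))\<^sup>2
    \<le> (norm (Phi (\<lambda>n. outer (phi n)) n i *v x))\<^sup>2 - (phi n \<bullet> (Phi (\<lambda>n. outer (phi n)) n i *v x))\<^sup>2"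
  using norm_minus_outer_mult_vec_le[OF assms(1)] assms(2)
  by (simp add: Phi_Suc matrix_vector_mul_assoc[symmetric])

lemma Phi_outer_decomposition:
  assumes "i \<le> n"
  shows "x = Phi (\<lambda>n. outer (phi n)) n i *v x
    + (\<Sum>l = i..<n. (phi l \<bullet> (Phi (\<lambda>n. outer (phi n)) l i *v x)) *\<^sub>R phi l)"
  using assms
proof (induction n rule: dec_induct)
  case (step n)
  then show ?case
    by (simp add: Phi_outer_Suc_mult_vec)
qed simp

lemma norm_Phi_outer_le:
  assumes "\<And>n. phi n \<bullet> phi n \<le> 1" and "i \<le> n"
  shows "(norm (Phi (\<lambda>n. outer (phi n)) n i *v x))\<^sup>2
    \<le> (norm x)\<^sup>2 - (\<Sum>l = i..<n. (phi l \<bullet> (Phi (\<lambda>n. outer (phi n)) l i *v x))\<^sup>2)"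
  using assms(2)
proof (induction n rule: dec_induct)
  case (step n)
  then show ?case
    using norm_Phi_outer_Suc_le[where phi = phi and x = x, OF assms(1) step(1)] by simp
qed simp

subsection \<open>The smallest eigenvalue of a symmetric matrix\<close>

lemma linear_coeff_zero_if_quadratic_nonneg:
  fixes a b :: real
  assumes "\<And>t. 0 \<le> 2 * t * a + t\<^sup>2 * b" and "0 \<le> b" and "0 \<le> a"
  shows "a = 0"
proof (rule ccontr)
  assume "a \<noteq> 0"
  with assms(3) have "a > 0" by simp
  define s where "s = a / (b + 1)"
  have s: "s > 0" "s * b < a"
    using \<open>a > 0\<close> assms(2) by (auto simp: s_def field_simps)
  have "0 \<le> s * (s * b - 2 * a)"
    using assms(1)[of "- s"] by (simp add: power2_eq_square algebra_simps)
  then have "2 * a \<le> s * b"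
    using s(1) by (simp add: zero_le_mult_iff)
  with s \<open>a > 0\<close> show False by linarith
qed

lemma psd_mult_vec_eq_0_if_quadratic_form_eq_0:
  fixes T :: "real^'m^'m"
  assumes sym: "\<And>x y. x \<bullet> (T *v y) = y \<bullet> (T *v x)"
    and psd: "\<And>x. 0 \<le> x \<bullet> (T *v x)"
    and "v \<bullet> (T *v v) = 0"
  shows "T *v v = 0"
proof -
  let ?w = "T *v v"
  have "0 \<le> 2 * t * (?w \<bullet> ?w) + t\<^sup>2 * (?w \<bullet> (T *v ?w))" for t
  proof -
    have "v \<bullet> (T *v ?w) = ?w \<bullet> ?w"
      using sym by simp
    then have "(v + t *\<^sub>R ?w) \<bullet> (T *v (v + t *\<^sub>R ?w)) = 2 * t * (?w \<bullet> ?w) + t\<^sup>2 * (?w \<bullet> (T *v ?w))"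
      using assms(3) by (simp add: matrix_vector_right_distrib matrix_vector_mult_scaleR
          inner_add_left inner_add_right power2_eq_square algebra_simps)
    then show ?thesis
      using psd by metis
  qed
  then have "?w \<bullet> ?w = 0"
    using psd by (rule linear_coeff_zero_if_quadratic_nonneg) simp
  then show ?thesis by simp
qed

lemma finite_eigenvalues:
  fixes S :: "real^'m^'m"
  assumes sym: "\<And>x y. x \<bullet> (S *v y) = y \<bullet> (S *v x)"
  shows "finite (eigenvalues S)"
proof -
  define e where "e l = (SOME v. v \<noteq> 0 \<and> S *v v = l *\<^sub>R v)" for l
  have e: "e l \<noteq> 0 \<and> S *v e l = l *\<^sub>R e l" if "l \<in> eigenvalues S" for l
    using that unfolding eigenvalues_def e_def by (rule CollectE) (rule someI_ex)
  have "inj_on e (eigenvalues S)"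
  proof (rule inj_onI)
    fix l1 l2 assume l: "l1 \<in> eigenvalues S" "l2 \<in> eigenvalues S" "e l1 = e l2"
    then have "l1 *\<^sub>R e l1 = l2 *\<^sub>R e l1" using e by metis
    then show "l1 = l2" using e[OF l(1)] by simp
  qed
  moreover have "pairwise orthogonal (e ` eigenvalues S)"
  proof (clarsimp simp: pairwise_def)
    fix l1 l2 assume l: "l1 \<in> eigenvalues S" "l2 \<in> eigenvalues S" "e l1 \<noteq> e l2"
    have "l2 * (e l1 \<bullet> e l2) = e l1 \<bullet> (S *v e l2)" using e[OF l(2)] by simp
    also have "\<dots> = e l2 \<bullet> (S *v e l1)" by (rule sym)
    also have "\<dots> = l1 * (e l1 \<bullet> e l2)" using e[OF l(1)] by (simp add: inner_commute)
    finally have "(l2 - l1) * (e l1 \<bullet> e l2) = 0" by (simp add: algebra_simps)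
    then show "orthogonal (e l1) (e l2)" using l by (auto simp: orthogonal_def)
  qed
  moreover have "0 \<notin> e ` eigenvalues S" using e by force
  ultimately show ?thesis
    using pairwise_orthogonal_independent independent_bound finite_imageD by blast
qed

text \<open>The minimum of the quadratic form on the unit sphere is an eigenvalue, because the
  positive semidefinite matrix S - l I annihilates the minimiser.\<close>

lemma lambda_min_le_quadratic_form:
  fixes S :: "real^'m^'m"
  assumes sym: "\<And>x y. x \<bullet> (S *v y) = y \<bullet> (S *v x)"
  shows "lambda_min S * (x \<bullet> x) \<le> x \<bullet> (S *v x)"
proof -
  have cont: "continuous_on (sphere 0 1) (\<lambda>x::real^'m. x \<bullet> (S *v x))"
    by (intro continuous_intros linear_continuous_on matrix_vector_mul_linear)
  obtain u :: "real^'m" where "norm u = 1" using vector_choose_size[of 1] by auto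
  then have "sphere (0::real^'m) 1 \<noteq> {}" by auto
  then obtain v where v: "v \<in> sphere 0 1"
    and v_min: "\<And>y. y \<in> sphere 0 1 \<Longrightarrow> v \<bullet> (S *v v) \<le> y \<bullet> (S *v y)"
    using continuous_attains_inf[OF compact_sphere _ cont] by blast
  define l where "l = v \<bullet> (S *v v)"
  have bound: "l * (y \<bullet> y) \<le> y \<bullet> (S *v y)" for y
  proof (cases "y = 0")
    case False
    then have "l \<le> (y /\<^sub>R norm y) \<bullet> (S *v (y /\<^sub>R norm y))"
      unfolding l_def by (intro v_min) simp
    also have "\<dots> = (y \<bullet> (S *v y)) / (norm y)\<^sup>2"
      by (simp add: matrix_vector_mult_scaleR power2_eq_square divide_inverse_commute)
    finally show ?thesis
      using False by (simp add: field_simps power2_norm_eq_inner)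
  qed simp
  define T where "T = S - l *\<^sub>R mat 1"
  have T: "T *v x = S *v x - l *\<^sub>R x" for x
    by (simp add: T_def matrix_vector_mult_diff_rdistrib flip: scaleR_matrix_vector_assoc)
  have "T *v v = 0"
  proof (rule psd_mult_vec_eq_0_if_quadratic_form_eq_0)
    show "x \<bullet> (T *v y) = y \<bullet> (T *v x)" for x y
      using sym[of x y] by (simp add: T inner_diff_right inner_commute)
    show "0 \<le> x \<bullet> (T *v x)" for x
      using bound[of x] by (simp add: T inner_diff_right)
    show "v \<bullet> (T *v v) = 0"
      using v by (simp add: T inner_diff_right l_def norm_eq_1)
  qed
  then have "l \<in> eigenvalues S"
    using v unfolding eigenvalues_def by (auto simp: T intro!: exI[of _ v])
  then have "lambda_min S \<le> l"
    unfolding lambda_min_def by (rule Min_le[OF finite_eigenvalues[OF sym]])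
  then show ?thesis
    using bound[of x] mult_right_mono[of "lambda_min S" l "x \<bullet> x"] by simp
qed

subsection \<open>The estimate on one block\<close>

lemma sum_weighted_square_le:
  fixes a c mu B :: "'i \<Rightarrow> real"
  assumes "finite I" and mu: "\<And>j. j \<in> I \<Longrightarrow> 0 \<le> mu j" "\<And>j. j \<in> I \<Longrightarrow> mu j \<le> M"
    and "0 \<le> M" and c: "\<And>j. j \<in> I \<Longrightarrow> (c j)\<^sup>2 \<le> B j * D" and a: "(\<Sum>j\<in>I. (a j)\<^sup>2) \<le> D"
  shows "(\<Sum>j\<in>I. mu j * (a j + c j)\<^sup>2) \<le> (sqrt M + sqrt (\<Sum>j\<in>I. mu j * B j))\<^sup>2 * D"
proof -
  let ?q = "\<Sum>j\<in>I. mu j * (a j + c j)\<^sup>2"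
  let ?u = "\<lambda>j. sqrt (mu j) * a j" and ?v = "\<lambda>j. sqrt (mu j) * c j"
  have "0 \<le> D"
    using a by (meson order_trans sum_nonneg zero_le_power2)
  have "sqrt ?q = L2_set (\<lambda>j. ?u j + ?v j) I"
    unfolding L2_set_def using mu(1)
    by (intro arg_cong[where f = sqrt] sum.cong) (auto simp: power_mult_distrib distrib_left[symmetric])
  also have "\<dots> \<le> L2_set ?u I + L2_set ?v I"
    by (rule L2_set_triangle_ineq)
  also have "L2_set ?u I \<le> sqrt M * sqrt D"
  proof -
    have "(\<Sum>j\<in>I. (?u j)\<^sup>2) \<le> (\<Sum>j\<in>I. M * (a j)\<^sup>2)"
      using mu by (intro sum_mono) (simp add: power_mult_distrib mult_right_mono)
    also have "\<dots> \<le> M * D"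
      using a \<open>0 \<le> M\<close> by (simp add: sum_distrib_left[symmetric] mult_left_mono)
    finally show ?thesis
      unfolding L2_set_def by (simp add: real_sqrt_mult[symmetric])
  qed
  also have "L2_set ?v I \<le> sqrt (\<Sum>j\<in>I. mu j * B j) * sqrt D"
  proof -
    have "(\<Sum>j\<in>I. (?v j)\<^sup>2) \<le> (\<Sum>j\<in>I. mu j * B j * D)"
      using mu c by (intro sum_mono) (simp add: power_mult_distrib mult.assoc mult_left_mono)
    then show ?thesis
      unfolding L2_set_def by (simp add: real_sqrt_mult[symmetric] sum_distrib_right)
  qed
  finally have "sqrt ?q \<le> (sqrt M + sqrt (\<Sum>j\<in>I. mu j * B j)) * sqrt D"
    by (simp add: algebra_simps)
  moreover have "0 \<le> ?q"
    using mu by (intro sum_nonneg) auto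
  ultimately have "(sqrt ?q)\<^sup>2 \<le> ((sqrt M + sqrt (\<Sum>j\<in>I. mu j * B j)) * sqrt D)\<^sup>2"
    by (intro power_mono) auto
  then show ?thesis
    using \<open>0 \<le> ?q\<close> \<open>0 \<le> D\<close> by (simp add: power_mult_distrib)
qed

lemma quadratic_form_le_Phi_outer_decrease:
  fixes phi :: "nat \<Rightarrow> real^'m" and mu :: "nat \<Rightarrow> real"
  assumes phi: "\<And>n. phi n \<bullet> phi n \<le> 1" and mu: "\<And>j. 0 \<le> mu j" and "s < N"
  defines "d \<equiv> sqrt (Max (mu ` {s..<N})) + sqrt (\<Sum>j = s..<N. mu j * (\<Sum>l = s..<j. (phi j \<bullet> phi l)\<^sup>2))"
  shows "x \<bullet> ((\<Sum>j = s..<N. mu j *\<^sub>R outer (phi j)) *v x)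
    \<le> d\<^sup>2 * ((norm x)\<^sup>2 - (norm (Phi (\<lambda>n. outer (phi n)) N s *v x))\<^sup>2)"
proof -
  define a where "a j = phi j \<bullet> (Phi (\<lambda>n. outer (phi n)) j s *v x)" for j
  define c where "c j = (\<Sum>l = s..<j. (phi j \<bullet> phi l) * a l)" for j
  have "x \<bullet> ((\<Sum>j = s..<N. mu j *\<^sub>R outer (phi j)) *v x) = (\<Sum>j = s..<N. mu j * (a j + c j)\<^sup>2)"
  proof (unfold inner_sum_scaleR_outer_mult_vec, intro sum.cong refl)
    fix j assume "j \<in> {s..<N}"
    then have "phi j \<bullet> x = a j + c j"
      using Phi_outer_decomposition[where phi = phi and i = s and n = j and x = x]
      by (metis (no_types, lifting) a_def c_def inner_add_right inner_scaleR_right inner_sum_right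
          sum.cong atLeastLessThan_iff mult.commute less_imp_le)
    then show "mu j * (phi j \<bullet> x) * (phi j \<bullet> x) = mu j * (a j + c j)\<^sup>2"
      by (simp add: power2_eq_square)
  qed
  also have "\<dots> \<le> d\<^sup>2 * ((norm x)\<^sup>2 - (norm (Phi (\<lambda>n. outer (phi n)) N s *v x))\<^sup>2)"
    unfolding d_def
  proof (rule sum_weighted_square_le)
    show "mu j \<le> Max (mu ` {s..<N})" if "j \<in> {s..<N}" for j
      using that by (intro Max_ge) auto
    then show "0 \<le> Max (mu ` {s..<N})"
      using mu[of s] \<open>s < N\<close> by (meson atLeastLessThan_iff order_trans order_refl)
    show a_bound: "(\<Sum>l = s..<N. (a l)\<^sup>2)
        \<le> (norm x)\<^sup>2 - (norm (Phi (\<lambda>n. outer (phi n)) N s *v x))\<^sup>2"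
      using norm_Phi_outer_le[where phi = phi and i = s and n = N and x = x, OF phi] \<open>s < N\<close>
      by (simp add: a_def)
    show "(c j)\<^sup>2 \<le> (\<Sum>l = s..<j. (phi j \<bullet> phi l)\<^sup>2)
        * ((norm x)\<^sup>2 - (norm (Phi (\<lambda>n. outer (phi n)) N s *v x))\<^sup>2)" if "j \<in> {s..<N}" for j
    proof -
      have "(\<Sum>l = s..<j. (a l)\<^sup>2) \<le> (\<Sum>l = s..<N. (a l)\<^sup>2)"
        using that by (intro sum_mono2) auto
      then show ?thesis
        using Cauchy_Schwarz_ineq_sum[of "\<lambda>l. phi j \<bullet> phi l" a "{s..<j}"] a_bound
        unfolding c_def by (meson mult_left_mono order_trans sum_nonneg zero_le_power2)
    qed
  qed (use mu in auto)
  finally show ?thesis .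
qed

lemma norm_Phi_outer_block_contraction:
  fixes phi :: "nat \<Rightarrow> real^'m" and mu :: "nat \<Rightarrow> real"
  assumes phi: "\<And>n. phi n \<bullet> phi n \<le> 1" and mu: "\<And>j. 0 \<le> mu j" and "s < N"
  defines "S \<equiv> \<Sum>j = s..<N. mu j *\<^sub>R outer (phi j)"
    and "d \<equiv> sqrt (Max (mu ` {s..<N})) + sqrt (\<Sum>j = s..<N. mu j * (\<Sum>l = s..<j. (phi j \<bullet> phi l)\<^sup>2))"
  assumes "d\<^sup>2 \<noteq> 0"
  shows "(norm (Phi (\<lambda>n. outer (phi n)) N s *v x))\<^sup>2 \<le> (1 - lambda_min S / d\<^sup>2) * (norm x)\<^sup>2"
proof -
  have "lambda_min S * (norm x)\<^sup>2 \<le> x \<bullet> (S *v x)"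
    unfolding S_def power2_norm_eq_inner
    by (rule lambda_min_le_quadratic_form) (simp add: inner_sum_scaleR_outer_mult_vec mult_ac)
  also have "\<dots> \<le> d\<^sup>2 * ((norm x)\<^sup>2 - (norm (Phi (\<lambda>n. outer (phi n)) N s *v x))\<^sup>2)"
    unfolding S_def d_def by (rule quadratic_form_le_Phi_outer_decrease[OF phi mu \<open>s < N\<close>])
  finally have "lambda_min S * (norm x)\<^sup>2 / d\<^sup>2
      \<le> (norm x)\<^sup>2 - (norm (Phi (\<lambda>n. outer (phi n)) N s *v x))\<^sup>2"
    using \<open>d\<^sup>2 \<noteq> 0\<close> by (simp add: pos_divide_le_eq mult.commute)
  then show ?thesis
    by (simp add: algebra_simps)
qed

lemma decseq_norm_Phi_outer:
  assumes "\<And>n. phi n \<bullet> phi n \<le> 1"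
  shows "decseq (\<lambda>n. (norm (Phi (\<lambda>n. outer (phi n)) n 0 *v x))\<^sup>2)"
proof (rule decseq_SucI)
  fix n
  show "(norm (Phi (\<lambda>n. outer (phi n)) (Suc n) 0 *v x))\<^sup>2 \<le> (norm (Phi (\<lambda>n. outer (phi n)) n 0 *v x))\<^sup>2"
    using norm_Phi_outer_Suc_le[where phi = phi and i = 0 and n = n and x = x, OF assms]
      zero_le_power2[of "phi n \<bullet> (Phi (\<lambda>n. outer (phi n)) n 0 *v x)"] by linarith
qed

subsection \<open>Convergence\<close>

lemma decseq_tendsto_0_if_block_contraction:
  fixes f c :: "nat \<Rightarrow> real" and t :: "nat \<Rightarrow> nat"
  assumes "decseq f" and f_nonneg: "\<And>n. 0 \<le> f n" and "strict_mono t"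
    and contr: "\<And>k. f (t (Suc k)) \<le> (1 - c (Suc k)) * f (t k)"
    and diverge: "filterlim (\<lambda>K. \<Sum>k = 1..K. c k) at_top sequentially"
  shows "f \<longlonglongrightarrow> 0"
proof -
  have bound: "f (t K) \<le> exp (- (\<Sum>k = 1..K. c k)) * f (t 0)" for K
  proof (induction K)
    case (Suc K)
    have "1 - c (Suc K) \<le> exp (- c (Suc K))"
      using exp_ge_add_one_self[of "- c (Suc K)"] by simp
    then have "f (t (Suc K)) \<le> exp (- c (Suc K)) * f (t K)"
      using contr[of K] f_nonneg[of "t K"] by (meson mult_right_mono order_trans)
    also have "\<dots> \<le> exp (- c (Suc K)) * (exp (- (\<Sum>k = 1..K. c k)) * f (t 0))"
      using Suc by (intro mult_left_mono) auto
    finally show ?case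
      by (simp add: mult.assoc[symmetric] exp_add[symmetric] add.commute)
  qed simp
  have "(\<lambda>K. exp (- (\<Sum>k = 1..K. c k))) \<longlonglongrightarrow> 0"
    using diverge by (intro filterlim_compose[OF exp_at_bot]) (simp add: filterlim_uminus_at_bot)
  then have upper: "(\<lambda>K. exp (- (\<Sum>k = 1..K. c k)) * f (t 0)) \<longlonglongrightarrow> 0"
    by (rule tendsto_mult_left_zero)
  have "\<forall>\<^sub>F K in sequentially. 0 \<le> (f \<circ> t) K"
    using f_nonneg by simp
  moreover have "\<forall>\<^sub>F K in sequentially. (f \<circ> t) K \<le> exp (- (\<Sum>k = 1..K. c k)) * f (t 0)"
    using bound by simp
  ultimately have "(f \<circ> t) \<longlonglongrightarrow> 0"
    using tendsto_sandwich[OF _ _ tendsto_const upper] by blast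
  moreover obtain L where "f \<longlonglongrightarrow> L"
    using f_nonneg by (auto intro: decseq_convergent[OF \<open>decseq f\<close>, of 0])
  ultimately show ?thesis
    using LIMSEQ_subseq_LIMSEQ[OF _ \<open>strict_mono t\<close>] LIMSEQ_unique by metis
qed

lemma tendsto_0_if_mult_vec_tendsto_0:
  fixes M :: "'a \<Rightarrow> real^'n^'m"
  assumes "\<And>x. ((\<lambda>n. M n *v x) \<longlongrightarrow> 0) F"
  shows "(M \<longlongrightarrow> 0) F"
proof (intro vec_tendstoI)
  fix i j
  have "((\<lambda>n. (M n *v axis j 1) $ i) \<longlongrightarrow> 0 $ i) F"
    by (rule tendsto_vec_nth[OF assms])
  then show "((\<lambda>n. M n $ i $ j) \<longlongrightarrow> 0 $ i $ j) F"
    by (simp add: matrix_vector_mult_basis column_def)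
qed

theorem mainTheorem2:
  fixes phi :: "nat \<Rightarrow> real^'m" and mu :: "nat \<Rightarrow> real" and t :: "nat \<Rightarrow> nat"
  assumes A_bounds: "\<And>n. loewner_le 0 (outer (phi n)) \<and> loewner_le (outer (phi n)) (mat 1)"
    and mu_nonneg: "\<And>j. mu j \<ge> 0"
    and t_mono: "strict_mono t"
    and denom_nz: "\<And>k. k \<ge> 1 \<Longrightarrow>
      (sqrt (Max (mu ` {t (k-1)..<t k}))
       + sqrt (\<Sum>j = t (k-1)..<t k. mu j * (\<Sum>l = t (k-1)..<j. (phi j \<bullet> phi l)^2)))^2 \<noteq> 0"
    and diverge: "filterlim (\<lambda>K. \<Sum>k = 1..K.
        lambda_min (\<Sum>j = t (k-1)..<t k. mu j *\<^sub>R outer (phi j)) /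
        (sqrt (Max (mu ` {t (k-1)..<t k}))
         + sqrt (\<Sum>j = t (k-1)..<t k. mu j * (\<Sum>l = t (k-1)..<j. (phi j \<bullet> phi l)^2)))^2)
        at_top sequentially"
  shows "(\<lambda>n. Phi (\<lambda>n. outer (phi n)) n 0) \<longlonglongrightarrow> 0"
proof -
  let ?A = "\<lambda>n. outer (phi n)"
  define c where "c k = lambda_min (\<Sum>j = t (k-1)..<t k. mu j *\<^sub>R outer (phi j)) /
    (sqrt (Max (mu ` {t (k-1)..<t k}))
     + sqrt (\<Sum>j = t (k-1)..<t k. mu j * (\<Sum>l = t (k-1)..<j. (phi j \<bullet> phi l)^2)))^2" for k
  have phi: "phi n \<bullet> phi n \<le> 1" for n
    \<comment> \<open>only A n \<le> I is needed: 0 \<le> phi n phi n^T holds for every vector\<close>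
    using A_bounds inner_self_le_1_if_loewner_le_outer by blast
  have contraction: "(norm (Phi ?A (t (Suc k)) 0 *v x))\<^sup>2 \<le> (1 - c (Suc k)) * (norm (Phi ?A (t k) 0 *v x))\<^sup>2"
    for k x
  proof -
    have "t k < t (Suc k)"
      using strict_monoD[OF t_mono lessI] .
    then have "Phi ?A (t (Suc k)) 0 = Phi ?A (t (Suc k)) (t k) ** Phi ?A (t k) 0"
      by (intro Phi_mult) auto
    then show ?thesis
      using norm_Phi_outer_block_contraction[where phi = phi and mu = mu
          and x = "Phi ?A (t k) 0 *v x", OF phi mu_nonneg \<open>t k < t (Suc k)\<close>]
        denom_nz[of "Suc k"] by (simp add: c_def matrix_vector_mul_assoc)
  qed
  have "(\<lambda>n. (norm (Phi ?A n 0 *v x))\<^sup>2) \<longlonglongrightarrow> 0" for x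
    using diverge unfolding c_def[symmetric]
    by (intro decseq_tendsto_0_if_block_contraction[OF decseq_norm_Phi_outer[OF phi] _ t_mono contraction])
      simp_all
  from tendsto_real_sqrt[OF this] show ?thesis
    by (intro tendsto_0_if_mult_vec_tendsto_0) (simp add: tendsto_norm_zero_iff)
qed

end
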